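(* For any $\mathcal{H}\subseteq\{0,1\}^{\mathcal{X}}$ and $w\in\mathbb{N}$ with $\operatorname{AL}_w(\mathcal{H})<\infty$, there exists a deterministic online learner which, under full-information feedback and on any sequence $(x_1,y_1),\dots,(x_T,y_T)$ realizable by $\mathcal{H}$ (i.e. $y_t=h(x_t)$ for some $h\in\mathcal{H}$ and all $t$), makes at most $w-1$ false negative mistakes and at most $\operatorname{AL}_w(\mathcal{H})$ false positive mistakes.
   Context: Online binary classification with full-information feedback: in each round $t$ the learner receives $x_t\in\mathcal{X}$, predicts $\hat y_t\in\{0,1\}$, and then observes the true label $y_t$. A false positive mistake is a round with $\hat y_t=1,y_t=0$; a false negative mistake is a round with $\hat y_t=0,y_t=1$. AL tree of width $w\in\mathbb{N}=\{1,2,\dots\}$ and depth $d$: a binary string $u$ is an internal node if $|u|<d$ and $u$ has fewer than $w$ ones; the tree assigns $x_u\in\mathcal{X}$ to each internal node. A path is a binary string $\sigma$ whose proper prefixes are all internal nodes but which is not itself one. The tree is shattered by $\mathcal{H}$ if for every path $\sigma$ some $h\in\mathcal{H}$ satisfies $h(x_{(\sigma_1,\dots,\sigma_{i-1})})=\sigma_i$ for all $i\le|\sigma|$. $\operatorname{AL}_w(\mathcal{H})$ is the largest $d$ such that such a tree of width $w$ and depth $d$ is shattered ($\infty$ if unbounded, $0$ if none). *)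

theory Defs
  imports Main "HOL-Library.Extended_Nat"
begin

text \<open>Binary strings are bool lists (True = 1). A node u is internal in an AL tree
  of width w and depth d iff |u| < d and u has fewer than w ones.\<close>

definition al_internal :: "nat \<Rightarrow> nat \<Rightarrow> bool list \<Rightarrow> bool" where
  "al_internal w d u \<longleftrightarrow> length u < d \<and> count_list u True < w"

definition al_path :: "nat \<Rightarrow> nat \<Rightarrow> bool list \<Rightarrow> bool" where
  "al_path w d \<sigma> \<longleftrightarrow> (\<forall>i<length \<sigma>. al_internal w d (take i \<sigma>)) \<and> \<not> al_internal w d \<sigma>"

text \<open>A tree assigns an instance to each node (only values at internal nodes matter).\<close>

definition al_shattered :: "('x \<Rightarrow> bool) set \<Rightarrow> nat \<Rightarrow> nat \<Rightarrow> (bool list \<Rightarrow> 'x) \<Rightarrow> bool" where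
  "al_shattered H w d tr \<longleftrightarrow>
     (\<forall>\<sigma>. al_path w d \<sigma> \<longrightarrow> (\<exists>h\<in>H. \<forall>i<length \<sigma>. h (tr (take i \<sigma>)) = \<sigma> ! i))"

text \<open>AL_w(H): largest shattered depth; infinity if unbounded; 0 if none (Sup {} = 0).\<close>

definition AL_dim :: "nat \<Rightarrow> ('x \<Rightarrow> bool) set \<Rightarrow> enat" where
  "AL_dim w H = Sup (enat ` {d. \<exists>tr. al_shattered H w d tr})"

text \<open>Deterministic online learner: maps the history of (instance, true label) pairs
  and the current instance to a prediction.\<close>

type_synonym 'x learner = "('x \<times> bool) list \<Rightarrow> 'x \<Rightarrow> bool"

definition predict :: "'x learner \<Rightarrow> ('x \<times> bool) list \<Rightarrow> nat \<Rightarrow> bool" where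
  "predict L S t = L (take t S) (fst (S ! t))"

definition false_pos :: "'x learner \<Rightarrow> ('x \<times> bool) list \<Rightarrow> nat" where
  "false_pos L S = card {t. t < length S \<and> predict L S t \<and> \<not> snd (S ! t)}"

definition false_neg :: "'x learner \<Rightarrow> ('x \<times> bool) list \<Rightarrow> nat" where
  "false_neg L S = card {t. t < length S \<and> \<not> predict L S t \<and> snd (S ! t)}"

definition realizable :: "('x \<Rightarrow> bool) set \<Rightarrow> ('x \<times> bool) list \<Rightarrow> bool" where
  "realizable H S \<longleftrightarrow> (\<exists>h\<in>H. \<forall>p\<in>set S. snd p = h (fst p))"

end

theory Submission
  imports Defs
begin

text \<open>The learner keeps the version space \<open>V\<close> of hypotheses consistent with the history
  and a width budget \<open>k\<close>, initially \<open>w\<close>. On an instance \<open>x\<close> it predicts 0 only if some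
  hypothesis in \<open>V\<close> labels \<open>x\<close> with 0 and restricting \<open>V\<close> to those hypotheses loses no
  depth that \<open>V\<close> shatters at width \<open>k\<close>. Hence a false positive strictly lowers the largest
  depth shattered at the current width. A false negative spends one unit of width but does
  not raise that depth: the 0-part of \<open>V\<close> shatters everything \<open>V\<close> does at width \<open>k\<close>, so
  placing \<open>x\<close> at the root of any tree shattered by the 1-part at width \<open>k - 1\<close> yields a
  deeper tree shattered by \<open>V\<close> at width \<open>k\<close>. The same construction shows that
  the budget never runs out: at width 0 a nonempty class shatters every depth, which
  would make the dimension at width 1 infinite.\<close>

definition al_shatters :: "('x \<Rightarrow> bool) set \<Rightarrow> nat \<Rightarrow> nat \<Rightarrow> bool" where
  "al_shatters H w d \<longleftrightarrow> (\<exists>tr. al_shattered H w d tr)"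

lemma al_path_iff_Nil:
  assumes "\<not> al_internal w d []"
  shows "al_path w d \<sigma> \<longleftrightarrow> \<sigma> = []"
  using assms by (auto simp: al_path_def)

lemma al_shatters_trivial:
  assumes "H \<noteq> {}" and "w = 0 \<or> d = 0"
  shows "al_shatters H w d"
proof -
  have "al_path w d \<sigma> \<longleftrightarrow> \<sigma> = []" for \<sigma>
    using assms(2) by (intro al_path_iff_Nil) (auto simp: al_internal_def)
  then have "al_shattered H w d tr" for tr
    using assms(1) by (auto simp: al_shattered_def)
  then show ?thesis
    unfolding al_shatters_def by blast
qed

lemma al_internal_Cons:
  assumes "1 \<le> w"
  shows "al_internal w (Suc d) (b # u) \<longleftrightarrow> al_internal (if b then w - 1 else w) d u"
  using assms by (auto simp: al_internal_def)

lemma al_path_Cons: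
  assumes "1 \<le> w"
  shows "al_path w (Suc d) (b # \<tau>) \<longleftrightarrow> al_path (if b then w - 1 else w) d \<tau>"
proof -
  have "al_internal w (Suc d) []"
    using assms by (simp add: al_internal_def)
  then have "(\<forall>i<length (b # \<tau>). al_internal w (Suc d) (take i (b # \<tau>))) \<longleftrightarrow>
      (\<forall>i<length \<tau>. al_internal (if b then w - 1 else w) d (take i \<tau>))"
    using assms by (auto simp: All_less_Suc2 al_internal_Cons simp del: One_nat_def)
  then show ?thesis
    using assms by (simp add: al_path_def al_internal_Cons del: One_nat_def)
qed

lemma al_path_nonempty:
  assumes "1 \<le> w" and "al_path w (Suc d) \<sigma>"
  shows "\<sigma> \<noteq> []"
  using assms by (auto simp: al_path_def al_internal_def)

lemma al_path_length_le:
  assumes "al_path w d \<sigma>"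
  shows "length \<sigma> \<le> d"
  by (metis assms al_internal_def al_path_def length_take less_irrefl min.absorb4 not_le_imp_less)

lemma al_path_extend:
  assumes "al_path w d \<sigma>"
  shows "\<exists>\<rho>. al_path w (Suc d) (\<sigma> @ \<rho>)"
proof (cases "count_list \<sigma> True < w")
  case True
  then have "length \<sigma> = d"
    using assms al_path_length_le[OF assms] by (auto simp: al_path_def al_internal_def)
  then have "al_path w (Suc d) (\<sigma> @ [False])"
    using assms True by (auto simp: al_path_def al_internal_def less_Suc_eq)
  then show ?thesis ..
next
  case False
  then have "al_path w (Suc d) (\<sigma> @ [])"
    using assms by (auto simp: al_path_def al_internal_def)
  then show ?thesis ..
qed

lemma al_shattered_SucD:
  assumes "al_shattered H w (Suc d) tr"
  shows "al_shattered H w d tr"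
  unfolding al_shattered_def
proof (intro allI impI)
  fix \<sigma> assume "al_path w d \<sigma>"
  then obtain \<rho> where "al_path w (Suc d) (\<sigma> @ \<rho>)"
    using al_path_extend by blast
  then obtain h where "h \<in> H"
    and h: "\<forall>i<length (\<sigma> @ \<rho>). h (tr (take i (\<sigma> @ \<rho>))) = (\<sigma> @ \<rho>) ! i"
    using assms unfolding al_shattered_def by blast
  have "h (tr (take i \<sigma>)) = \<sigma> ! i" if "i < length \<sigma>" for i
    using h[rule_format, of i] that by (simp add: nth_append)
  with \<open>h \<in> H\<close> show "\<exists>h\<in>H. \<forall>i<length \<sigma>. h (tr (take i \<sigma>)) = \<sigma> ! i"
    by blast
qed

lemma al_shatters_le:
  assumes "al_shatters H w d" and "d' \<le> d"
  shows "al_shatters H w d'"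
  using assms(2,1)
  by (induction rule: dec_induct) (auto simp: al_shatters_def intro: al_shattered_SucD)

lemma al_shatters_mono:
  assumes "al_shatters H w d" and "H \<subseteq> H'"
  shows "al_shatters H' w d"
proof -
  obtain tr where "al_shattered H w d tr"
    using assms(1) unfolding al_shatters_def by blast
  then have "al_shattered H' w d tr"
    using assms(2) unfolding al_shattered_def by (meson subsetD)
  then show ?thesis
    unfolding al_shatters_def by blast
qed

lemma al_shatters_SucI:
  assumes "1 \<le> w"
    and "al_shatters {h\<in>H. \<not> h x} w d" and "al_shatters {h\<in>H. h x} (w - 1) d"
  shows "al_shatters H w (Suc d)"
proof -
  obtain tr0 tr1 where tr0_tr1:
      "al_shattered {h\<in>H. \<not> h x} w d tr0" "al_shattered {h\<in>H. h x} (w - 1) d tr1"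
    using assms(2,3) unfolding al_shatters_def by blast
  define tr where "tr b = (if b then tr1 else tr0)" for b
  have tr: "al_shattered {h\<in>H. h x = b} (if b then w - 1 else w) d (tr b)" for b
    using tr0_tr1 by (cases b) (simp_all add: tr_def)
  define root_tr where "root_tr u = (case u of [] \<Rightarrow> x | b # u' \<Rightarrow> tr b u')" for u
  have "al_shattered H w (Suc d) root_tr"
    unfolding al_shattered_def
  proof (intro allI impI)
    fix \<sigma> assume \<sigma>: "al_path w (Suc d) \<sigma>"
    then obtain b \<tau> where \<sigma>_eq: "\<sigma> = b # \<tau>"
      using al_path_nonempty[OF assms(1)] by (cases \<sigma>) auto
    then have "al_path (if b then w - 1 else w) d \<tau>"
      using \<sigma> al_path_Cons[OF assms(1)] by simp
    then obtain h where "h \<in> H" "h x = b"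
      and h: "\<forall>i<length \<tau>. h (tr b (take i \<tau>)) = \<tau> ! i"
      using tr[of b] unfolding al_shattered_def by blast
    then have "\<forall>i<length \<sigma>. h (root_tr (take i \<sigma>)) = \<sigma> ! i"
      by (auto simp: \<sigma>_eq root_tr_def All_less_Suc2)
    with \<open>h \<in> H\<close> show "\<exists>h\<in>H. \<forall>i<length \<sigma>. h (root_tr (take i \<sigma>)) = \<sigma> ! i"
      by blast
  qed
  then show ?thesis
    unfolding al_shatters_def by blast
qed

definition al_predict :: "('x \<Rightarrow> bool) set \<Rightarrow> nat \<Rightarrow> 'x \<Rightarrow> bool" where
  "al_predict V k x \<longleftrightarrow>
     {h\<in>V. \<not> h x} = {} \<or> (\<exists>d. al_shatters V k d \<and> \<not> al_shatters {h\<in>V. \<not> h x} k d)"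

fun al_update :: "('x \<Rightarrow> bool) set \<times> nat \<Rightarrow> 'x \<times> bool \<Rightarrow> ('x \<Rightarrow> bool) set \<times> nat" where
  "al_update (V, k) (x, y) = ({h\<in>V. h x = y}, if y \<and> \<not> al_predict V k x then k - 1 else k)"

definition al_state ::
    "('x \<Rightarrow> bool) set \<Rightarrow> nat \<Rightarrow> ('x \<times> bool) list \<Rightarrow> ('x \<Rightarrow> bool) set \<times> nat" where
  "al_state H w S = foldl al_update (H, w) S"

definition al_learner :: "('x \<Rightarrow> bool) set \<Rightarrow> nat \<Rightarrow> 'x learner" where
  "al_learner H w S x = (case al_state H w S of (V, k) \<Rightarrow> al_predict V k x)"

lemma al_shatters_Suc_if_not_predict:
  assumes "1 \<le> k" and "\<not> al_predict V k x" and "al_shatters {h\<in>V. h x} (k - 1) d"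
  shows "al_shatters V k (Suc d)"
  using assms(3)
proof (induction d)
  case 0
  have "{h\<in>V. \<not> h x} \<noteq> {}"
    using assms(2) by (simp add: al_predict_def)
  then have "al_shatters {h\<in>V. \<not> h x} k 0"
    by (rule al_shatters_trivial) simp
  then show ?case
    using 0 by (rule al_shatters_SucI[OF assms(1)])
next
  case (Suc d)
  have "al_shatters {h\<in>V. h x} (k - 1) d"
    using Suc.prems by (rule al_shatters_le) simp
  then have "al_shatters V k (Suc d)"
    by (rule Suc.IH)
  then have "al_shatters {h\<in>V. \<not> h x} k (Suc d)"
    using assms(2) by (simp add: al_predict_def)
  then show ?case
    using Suc.prems by (rule al_shatters_SucI[OF assms(1)])
qed

lemma al_predict_width_one:
  assumes bound: "\<And>d. al_shatters V 1 d \<Longrightarrow> d \<le> B" and "h \<in> V" and "h x"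
  shows "al_predict V 1 x"
proof (rule ccontr)
  assume "\<not> al_predict V 1 x"
  moreover have "al_shatters {g\<in>V. g x} 0 B"
    using assms(2,3) by (intro al_shatters_trivial) auto
  ultimately have "al_shatters V 1 (Suc B)"
    using al_shatters_Suc_if_not_predict[of 1 V x B] by simp
  then show False
    using bound by fastforce
qed

lemma al_predict_loses_depth:
  assumes "al_predict V k x" and "h \<in> V" and "\<not> h x"
  obtains d0 where "al_shatters V k d0" and "\<And>d. al_shatters {g\<in>V. \<not> g x} k d \<Longrightarrow> d < d0"
proof -
  have "{g\<in>V. \<not> g x} \<noteq> {}"
    using assms(2,3) by blast
  then obtain d0 where "al_shatters V k d0" and lost: "\<not> al_shatters {g\<in>V. \<not> g x} k d0"
    using assms(1) by (auto simp: al_predict_def)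
  moreover have "d < d0" if "al_shatters {g\<in>V. \<not> g x} k d" for d
    using lost al_shatters_le[OF that] by (meson not_le_imp_less)
  ultimately show ?thesis
    using that by blast
qed

lemma al_update_invariant:
  assumes "h \<in> V" and "1 \<le> k" and bound: "\<And>d. al_shatters V k d \<Longrightarrow> d + F \<le> D"
    and update: "al_update (V, k) (x, h x) = (V', k')"
  shows "h \<in> V'" and "1 \<le> k'"
    and "\<And>d. al_shatters V' k' d \<Longrightarrow> d + F + of_bool (al_predict V k x \<and> \<not> h x) \<le> D"
proof -
  have V': "V' = {g\<in>V. g x = h x}"
    using update by simp
  show "h \<in> V'"
    using assms(1) V' by simp
  show "1 \<le> k'"
  proof (cases "h x \<and> \<not> al_predict V k x")
    case True
    then have "k \<noteq> 1"
      using al_predict_width_one[of V D h x] bound assms(1) by fastforce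
    then show ?thesis
      using True update assms(2) by auto
  qed (use update assms(2) in auto)
  consider (false_neg) "h x" "\<not> al_predict V k x" | (false_pos) "\<not> h x" "al_predict V k x"
    | (correct) "h x = al_predict V k x"
    by blast
  then show "d + F + of_bool (al_predict V k x \<and> \<not> h x) \<le> D" if d: "al_shatters V' k' d" for d
  proof cases
    case false_neg
    then have "al_shatters V k (Suc d)"
      using al_shatters_Suc_if_not_predict[OF assms(2)] d V' update by simp
    then show ?thesis
      using bound false_neg by fastforce
  next
    case false_pos
    then obtain d0 where "al_shatters V k d0" and "d < d0"
      using al_predict_loses_depth[OF false_pos(2) assms(1)] d V' update by auto
    then show ?thesis
      using false_pos bound by fastforce
  next
    case correct
    then have "al_shatters V k d"
      using d V' update by (auto elim: al_shatters_mono)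
    then show ?thesis
      using correct bound by auto
  qed
qed

lemma card_mistakes_snoc:
  "card {t. t < length (S @ [(x, y)]) \<and> P (predict L (S @ [(x, y)]) t) (snd ((S @ [(x, y)]) ! t))} =
   card {t. t < length S \<and> P (predict L S t) (snd (S ! t))} + of_bool (P (L S x) y)"
proof -
  let ?A = "{t. t < length S \<and> P (predict L S t) (snd (S ! t))}"
  have "{t. t < length (S @ [(x, y)]) \<and> P (predict L (S @ [(x, y)]) t) (snd ((S @ [(x, y)]) ! t))} =
      ?A \<union> (if P (L S x) y then {length S} else {})"
    by (auto simp: predict_def nth_append less_Suc_eq)
  moreover have "finite ?A" and "length S \<notin> ?A"
    by auto
  ultimately show ?thesis
    by simp
qed

lemma false_neg_snoc: "false_neg L (S @ [(x, y)]) = false_neg L S + of_bool (\<not> L S x \<and> y)"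
  unfolding false_neg_def by (rule card_mistakes_snoc[where P = "\<lambda>p y. \<not> p \<and> y"])

lemma false_pos_snoc: "false_pos L (S @ [(x, y)]) = false_pos L S + of_bool (L S x \<and> \<not> y)"
  unfolding false_pos_def by (rule card_mistakes_snoc[where P = "\<lambda>p y. p \<and> \<not> y"])

lemma al_learner_invariant:
  assumes "h \<in> H" and "1 \<le> w" and "\<And>d. al_shatters H w d \<Longrightarrow> d \<le> D"
    and "\<forall>p\<in>set S. snd p = h (fst p)"
  shows "case al_state H w S of (V, k) \<Rightarrow>
    h \<in> V \<and> 1 \<le> k \<and> false_neg (al_learner H w) S + k = w \<and>
    (\<forall>d. al_shatters V k d \<longrightarrow> d + false_pos (al_learner H w) S \<le> D)"
  using assms(4)
proof (induction S rule: rev_induct)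
  case Nil
  then show ?case
    using assms(1-3) by (simp add: al_state_def false_neg_def false_pos_def)
next
  case (snoc p S)
  obtain x where p: "p = (x, h x)"
    using snoc.prems by (cases p) simp
  obtain V k where state: "al_state H w S = (V, k)"
    by (cases "al_state H w S")
  obtain V' k' where update: "al_update (V, k) (x, h x) = (V', k')"
    by (cases "al_update (V, k) (x, h x)")
  have state': "al_state H w (S @ [(x, h x)]) = (V', k')"
    using state update by (simp add: al_state_def)
  have learner: "al_learner H w S x = al_predict V k x"
    by (simp add: al_learner_def state)
  have IH: "h \<in> V" "1 \<le> k" "false_neg (al_learner H w) S + k = w"
      "\<And>d. al_shatters V k d \<Longrightarrow> d + false_pos (al_learner H w) S \<le> D"
    using snoc state by auto
  note step = al_update_invariant[OF IH(1,2) IH(4) update]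
  have "k' + of_bool (\<not> al_predict V k x \<and> h x) = k"
    using update IH(2) by auto
  then show ?case
    unfolding p state' prod.case
    using step IH(3) by (simp add: false_neg_snoc false_pos_snoc learner add.assoc)
qed

lemma al_shatters_le_AL_dim:
  assumes "al_shatters H w d"
  shows "enat d \<le> AL_dim w H"
  unfolding AL_dim_def by (rule Sup_upper) (use assms in \<open>auto simp: al_shatters_def\<close>)

theorem lemma3:
  fixes H :: "('x \<Rightarrow> bool) set" and w :: nat
  assumes "w \<ge> 1"
    and "AL_dim w H \<noteq> \<infinity>"
  shows "\<exists>L :: 'x learner. \<forall>S. realizable H S \<longrightarrow>
           false_neg L S \<le> w - 1 \<and> enat (false_pos L S) \<le> AL_dim w H"
proof (intro exI allI impI)
  obtain D where D: "AL_dim w H = enat D"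
    using assms(2) by (cases "AL_dim w H") auto
  then have bound: "d \<le> D" if "al_shatters H w d" for d
    using al_shatters_le_AL_dim[OF that] by simp
  fix S assume "realizable H S"
  then obtain h where "h \<in> H" and h: "\<forall>p\<in>set S. snd p = h (fst p)"
    unfolding realizable_def by blast
  obtain V k where "al_state H w S = (V, k)"
    by (cases "al_state H w S")
  with al_learner_invariant[OF \<open>h \<in> H\<close> assms(1) bound h]
  have "V \<noteq> {}" "1 \<le> k" "false_neg (al_learner H w) S + k = w"
    "\<And>d. al_shatters V k d \<Longrightarrow> d + false_pos (al_learner H w) S \<le> D"
    by auto
  moreover from \<open>V \<noteq> {}\<close> have "al_shatters V k 0"
    by (simp add: al_shatters_trivial)
  ultimately show
    "false_neg (al_learner H w) S \<le> w - 1 \<and> enat (false_pos (al_learner H w) S) \<le> AL_dim w H"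
    using D by fastforce
qed

end
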